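(* Let $\lambda_1\neq\lambda_2$ be real numbers, let $$J_3=\begin{pmatrix}\lambda_1&1&0\\0&\lambda_1&0\\0&0&\lambda_2\end{pmatrix},$$ and $h>0$. If $\lambda_1=0$, set $\psi=1$, $\phi=h$, $\theta=\dfrac{e^{\lambda_2h}-\lambda_2h-1}{\lambda_2h(e^{\lambda_2h}-1)}$. If $\lambda_1\neq 0$, set $$T_1=\frac{2he^{\lambda_1h}\lambda_1+\dfrac{(\lambda_1+\lambda_2)(e^{\lambda_2h}-e^{\lambda_1h})}{\lambda_1-\lambda_2}-(e^{\lambda_1h}-e^{\lambda_2h})}{2\Big[he^{\lambda_1h}\lambda_1^2-\dfrac{\lambda_1\lambda_2(e^{\lambda_1h}-e^{\lambda_2h})}{\lambda_1-\lambda_2}\Big]},$$ $$\psi=1+\frac{\lambda_1(e^{\lambda_2h}-1)-\lambda_2(e^{\lambda_1h}-1)+\lambda_1\lambda_2(e^{\lambda_1h}-e^{\lambda_2h})T_1}{\lambda_1-\lambda_2},$$ $$\phi=\frac{e^{\lambda_1h}-e^{\lambda_2h}+\big[\lambda_2(e^{\lambda_2h}-1)-\lambda_1(e^{\lambda_1h}-1)\big]T_1}{\lambda_1-\lambda_2},\qquad \theta=\frac{T_1}{\phi}.$$ Then (whenever these expressions are defined and $(1-\phi\lambda_1\theta)(1-\phi\lambda_2\theta)\neq 0$) the difference scheme $$\frac{\mathbf{x}_{k+1}-\psi\mathbf{x}_k}{\phi}=J_3\big[\theta\mathbf{x}_{k+1}+(1-\theta)\mathbf{x}_k\big]$$ is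 exact for the system $\mathbf{x}'=J_3\mathbf{x}$.
   Context: A one-step difference scheme with step size $h>0$ for $\mathbf{x}'=M\mathbf{x}$ is called exact if for every initial vector $\mathbf{x}_0$ the sequence $(\mathbf{x}_k)$ it generates satisfies $\mathbf{x}_k=\mathbf{x}(kh)$ for all $k\ge 0$, where $\mathbf{x}(t)$ solves $\mathbf{x}'=M\mathbf{x}$, $\mathbf{x}(0)=\mathbf{x}_0$. *)

theory Defs
  imports "HOL-Analysis.Analysis"
begin

definition J3 :: "real \<Rightarrow> real \<Rightarrow> real^3^3" where
  "J3 l1 l2 = vector [vector [l1, 1, 0], vector [0, l1, 0], vector [0, 0, l2]]"

definition T1_num :: "real \<Rightarrow> real \<Rightarrow> real \<Rightarrow> real" where
  "T1_num l1 l2 h = 2 * h * exp (l1*h) * l1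
     + (l1 + l2) * (exp (l2*h) - exp (l1*h)) / (l1 - l2)
     - (exp (l1*h) - exp (l2*h))"

definition T1_den :: "real \<Rightarrow> real \<Rightarrow> real \<Rightarrow> real" where
  "T1_den l1 l2 h = 2 * (h * exp (l1*h) * l1^2
     - l1 * l2 * (exp (l1*h) - exp (l2*h)) / (l1 - l2))"

definition T1 :: "real \<Rightarrow> real \<Rightarrow> real \<Rightarrow> real" where
  "T1 l1 l2 h = T1_num l1 l2 h / T1_den l1 l2 h"

definition psi :: "real \<Rightarrow> real \<Rightarrow> real \<Rightarrow> real" where
  "psi l1 l2 h = (if l1 = 0 then 1 else
     1 + (l1 * (exp (l2*h) - 1) - l2 * (exp (l1*h) - 1)
          + l1 * l2 * (exp (l1*h) - exp (l2*h)) * T1 l1 l2 h) / (l1 - l2))"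

definition phi :: "real \<Rightarrow> real \<Rightarrow> real \<Rightarrow> real" where
  "phi l1 l2 h = (if l1 = 0 then h else
     (exp (l1*h) - exp (l2*h)
      + (l2 * (exp (l2*h) - 1) - l1 * (exp (l1*h) - 1)) * T1 l1 l2 h) / (l1 - l2))"

definition theta :: "real \<Rightarrow> real \<Rightarrow> real \<Rightarrow> real" where
  "theta l1 l2 h = (if l1 = 0 then
       (exp (l2*h) - l2*h - 1) / (l2*h*(exp (l2*h) - 1))
     else T1 l1 l2 h / phi l1 l2 h)"

definition scheme_step :: "real \<Rightarrow> real \<Rightarrow> real \<Rightarrow> real^3^3 \<Rightarrow> (nat \<Rightarrow> real^3) \<Rightarrow> bool" where
  "scheme_step ps ph th M xs \<longleftrightarrow> (\<forall>k.
     (1 / ph) *\<^sub>R (xs (Suc k) - ps *\<^sub>R xs k)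
       = M *v (th *\<^sub>R xs (Suc k) + (1 - th) *\<^sub>R xs k))"

definition exact_scheme :: "real \<Rightarrow> real \<Rightarrow> real \<Rightarrow> real \<Rightarrow> real^3^3 \<Rightarrow> bool" where
  "exact_scheme h ps ph th M \<longleftrightarrow>
     (\<forall>x0 xs x. xs 0 = x0 \<and> scheme_step ps ph th M xs \<and> x 0 = x0
        \<and> (\<forall>t\<ge>0. (x has_vector_derivative (M *v x t)) (at t within {0..}))
        \<longrightarrow> (\<forall>k. xs k = x (real k * h)))"

end

theory Submission
  imports Defs
begin

text \<open>
  Solutions of \<open>x' = J x\<close> with \<open>J = J3 \<lambda>\<^sub>1 \<lambda>\<^sub>2\<close> satisfy \<open>x(t + h) = e\<^sup>h\<^sup>J x(t)\<close>,
  where \<open>e\<^sup>t\<^sup>J\<close> is explicit because \<open>J\<close> is in Jordan form. When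
  \<open>(1 - \<phi>\<theta>\<lambda>\<^sub>1)(1 - \<phi>\<theta>\<lambda>\<^sub>2) \<noteq> 0\<close> the matrix \<open>I - \<phi>\<theta>J\<close> is invertible, so one step of the
  scheme determines \<open>x\<^sub>k\<^sub>+\<^sub>1\<close> from \<open>x\<^sub>k\<close>, and exactness by induction on \<open>k\<close> reduces to
  the matrix identity \<open>(I - \<phi>\<theta>J) e\<^sup>h\<^sup>J = \<psi>I + \<phi>(1 - \<theta>)J\<close>. This amounts to the scalar
  identity \<open>\<psi> + \<phi>\<lambda> = e\<^sup>\<lambda>\<^sup>h + \<phi>\<theta>\<lambda>(1 - e\<^sup>\<lambda>\<^sup>h)\<close> at \<open>\<lambda> = \<lambda>\<^sub>1, \<lambda>\<^sub>2\<close> together with its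
  \<open>\<lambda>\<close>-derivative at \<open>\<lambda>\<^sub>1\<close> (coming from the Jordan block). The given \<open>\<psi>, \<phi>\<close> satisfy
  the two eigenvalue equations for every value of \<open>T\<^sub>1 = \<phi>\<theta>\<close>, and for \<open>\<lambda>\<^sub>1 \<noteq> 0\<close> the
  value \<open>T\<^sub>1\<close> is the solution of the remaining linear equation.
\<close>

lemma linear_ode_unique_nonneg:
  fixes f g u :: "real \<Rightarrow> real"
  assumes f: "\<And>t. t \<ge> 0 \<Longrightarrow> (f has_real_derivative (l * f t + u t)) (at t within {0..})"
    and g: "\<And>t. t \<ge> 0 \<Longrightarrow> (g has_real_derivative (l * g t + u t)) (at t within {0..})"
    and init: "f 0 = g 0" and "t \<ge> 0"
  shows "f t = g t"
proof -
  define w where "w s = exp (- (l * s)) * (f s - g s)" for s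
  have "\<exists>c. \<forall>s\<in>{0::real..}. w s = c"
  proof (rule has_field_derivative_zero_constant)
    fix s :: real assume s: "s \<in> {0..}"
    have "(w has_real_derivative (- l * exp (- (l * s)) * (f s - g s)
        + exp (- (l * s)) * ((l * f s + u s) - (l * g s + u s)))) (at s within {0..})"
      unfolding w_def using f[of s] g[of s] s by (auto intro!: derivative_eq_intros)
    then show "(w has_real_derivative 0) (at s within {0..})"
      by (simp add: algebra_simps)
  qed simp
  then have "w t = w 0" using \<open>t \<ge> 0\<close> by auto
  then show ?thesis using init by (simp add: w_def)
qed

lemma J3_mult_vector:
  "J3 l1 l2 *v v = vector [l1 * v$1 + v$2, l1 * v$2, l2 * v$3]"
  by (simp add: vec_eq_iff forall_3 J3_def matrix_vector_mult_def sum_3)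

definition J3_flow :: "real \<Rightarrow> real \<Rightarrow> real \<Rightarrow> real^3 \<Rightarrow> real^3" where
  "J3_flow l1 l2 t z = vector [exp (l1 * t) * (z$1 + t * z$2), exp (l1 * t) * z$2, exp (l2 * t) * z$3]"

lemma J3_flow_add:
  "J3_flow l1 l2 (s + t) z = J3_flow l1 l2 t (J3_flow l1 l2 s z)"
  by (simp add: J3_flow_def vec_eq_iff forall_3 exp_add algebra_simps)

lemma J3_solution_eq_flow:
  fixes x :: "real \<Rightarrow> real^3"
  assumes ode: "\<forall>t\<ge>0. (x has_vector_derivative (J3 l1 l2 *v x t)) (at t within {0..})"
    and "t \<ge> 0"
  shows "x t = J3_flow l1 l2 t (x 0)"
proof -
  have comp: "((\<lambda>t. x t $ i) has_real_derivative (J3 l1 l2 *v x t) $ i) (at t within {0..})"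
    if "t \<ge> 0" for t i
    using bounded_linear.has_vector_derivative[OF bounded_linear_vec_nth ode[rule_format, OF that]]
    by (simp add: has_real_derivative_iff_has_vector_derivative)
  have x3: "x s $ 3 = exp (l2 * s) * x 0 $ 3" if "s \<ge> 0" for s
  proof (rule linear_ode_unique_nonneg[OF _ _ _ that, where u = "\<lambda>_. 0"])
    fix t :: real assume "t \<ge> 0"
    show "((\<lambda>t. x t $ 3) has_real_derivative l2 * x t $ 3 + 0) (at t within {0..})"
      using comp[OF \<open>t \<ge> 0\<close>, of 3] by (simp add: J3_mult_vector)
    show "((\<lambda>s. exp (l2 * s) * x 0 $ 3) has_real_derivative
        l2 * (exp (l2 * t) * x 0 $ 3) + 0) (at t within {0..})"
      by (auto intro!: derivative_eq_intros)
  qed simp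
  have x2: "x s $ 2 = exp (l1 * s) * x 0 $ 2" if "s \<ge> 0" for s
  proof (rule linear_ode_unique_nonneg[OF _ _ _ that, where u = "\<lambda>_. 0"])
    fix t :: real assume "t \<ge> 0"
    show "((\<lambda>t. x t $ 2) has_real_derivative l1 * x t $ 2 + 0) (at t within {0..})"
      using comp[OF \<open>t \<ge> 0\<close>, of 2] by (simp add: J3_mult_vector)
    show "((\<lambda>s. exp (l1 * s) * x 0 $ 2) has_real_derivative
        l1 * (exp (l1 * t) * x 0 $ 2) + 0) (at t within {0..})"
      by (auto intro!: derivative_eq_intros)
  qed simp
  have x1: "x s $ 1 = exp (l1 * s) * (x 0 $ 1 + s * x 0 $ 2)" if "s \<ge> 0" for s
  proof (rule linear_ode_unique_nonneg[OF _ _ _ that, where u = "\<lambda>t. exp (l1 * t) * x 0 $ 2"])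
    fix t :: real assume "t \<ge> 0"
    show "((\<lambda>t. x t $ 1) has_real_derivative l1 * x t $ 1 + exp (l1 * t) * x 0 $ 2)
        (at t within {0..})"
      using comp[OF \<open>t \<ge> 0\<close>, of 1] x2[OF \<open>t \<ge> 0\<close>] by (simp add: J3_mult_vector)
    show "((\<lambda>s. exp (l1 * s) * (x 0 $ 1 + s * x 0 $ 2)) has_real_derivative
        l1 * (exp (l1 * t) * (x 0 $ 1 + t * x 0 $ 2)) + exp (l1 * t) * x 0 $ 2) (at t within {0..})"
      by (auto intro!: derivative_eq_intros simp: algebra_simps)
  qed simp
  show ?thesis
    using x1[OF \<open>t \<ge> 0\<close>] x2[OF \<open>t \<ge> 0\<close>] x3[OF \<open>t \<ge> 0\<close>]
    by (simp add: J3_flow_def vec_eq_iff forall_3)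
qed

definition J3_exactness_conditions ::
    "real \<Rightarrow> real \<Rightarrow> real \<Rightarrow> real \<Rightarrow> real \<Rightarrow> real \<Rightarrow> bool" where
  "J3_exactness_conditions l1 l2 h ps ph th \<longleftrightarrow>
     ps + ph * l1 = exp (l1 * h) + ph * th * l1 * (1 - exp (l1 * h)) \<and>
     ps + ph * l2 = exp (l2 * h) + ph * th * l2 * (1 - exp (l2 * h)) \<and>
     ph = h * exp (l1 * h) - ph * th * (l1 * h * exp (l1 * h) + exp (l1 * h) - 1)"

lemma J3_flow_scheme_step:
  assumes "ph \<noteq> 0" and "J3_exactness_conditions l1 l2 h ps ph th"
  shows "(1 / ph) *\<^sub>R (J3_flow l1 l2 h z - ps *\<^sub>R z)
    = J3 l1 l2 *v (th *\<^sub>R J3_flow l1 l2 h z + (1 - th) *\<^sub>R z)"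
proof -
  define ea eb where "ea = exp (l1 * h)" and "eb = exp (l2 * h)"
  define A where "A = ea + ph * th * l1 * (1 - ea) - ps - ph * l1"
  define B where "B = eb + ph * th * l2 * (1 - eb) - ps - ph * l2"
  define C where "C = h * ea - ph * th * (l1 * h * ea + ea - 1) - ph"
  have "A = 0" "B = 0" "C = 0"
    using assms(2) by (auto simp: J3_exactness_conditions_def A_def B_def C_def ea_def eb_def)
  moreover have "J3_flow l1 l2 h z - ps *\<^sub>R z - ph *\<^sub>R (J3 l1 l2 *v (th *\<^sub>R J3_flow l1 l2 h z + (1 - th) *\<^sub>R z))
      = vector [z$1 * A + z$2 * C, z$2 * A, z$3 * B]"
    by (simp add: J3_flow_def J3_mult_vector vec_eq_iff forall_3 A_def B_def C_def ea_def eb_def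
        algebra_simps)
  ultimately show ?thesis
    using assms(1) by (simp add: vec_eq_iff forall_3 field_simps)
qed

lemma J3_fixed_point_zero:
  assumes "(1 - c * l1) * (1 - c * l2) \<noteq> 0" and d: "d = c *\<^sub>R (J3 l1 l2 *v d)"
  shows "d = 0"
proof -
  have "1 - c * l1 \<noteq> 0" "1 - c * l2 \<noteq> 0" using assms(1) by auto
  have "d$1 * (1 - c * l1) = c * d$2" "d$2 * (1 - c * l1) = 0" "d$3 * (1 - c * l2) = 0"
    using d by (simp_all add: vec_eq_iff forall_3 J3_mult_vector algebra_simps)
  then show ?thesis
    using \<open>1 - c * l1 \<noteq> 0\<close> \<open>1 - c * l2 \<noteq> 0\<close> by (simp add: vec_eq_iff forall_3)
qed

lemma J3_scheme_step_unique:
  assumes "ph \<noteq> 0" and "(1 - ph * l1 * th) * (1 - ph * l2 * th) \<noteq> 0"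
    and "(1 / ph) *\<^sub>R (y - ps *\<^sub>R z) = J3 l1 l2 *v (th *\<^sub>R y + (1 - th) *\<^sub>R z)"
    and "(1 / ph) *\<^sub>R (y' - ps *\<^sub>R z) = J3 l1 l2 *v (th *\<^sub>R y' + (1 - th) *\<^sub>R z)"
  shows "y = y'"
proof -
  have "(1 / ph) *\<^sub>R (y - y') - J3 l1 l2 *v (th *\<^sub>R (y - y'))
      = ((1 / ph) *\<^sub>R (y - ps *\<^sub>R z) - J3 l1 l2 *v (th *\<^sub>R y + (1 - th) *\<^sub>R z))
      - ((1 / ph) *\<^sub>R (y' - ps *\<^sub>R z) - J3 l1 l2 *v (th *\<^sub>R y' + (1 - th) *\<^sub>R z))"
    by (simp add: matrix_vector_right_distrib matrix_vector_mult_diff_distrib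
        matrix_vector_mult_scaleR algebra_simps)
  then have "(1 / ph) *\<^sub>R (y - y') = J3 l1 l2 *v (th *\<^sub>R (y - y'))"
    using assms(3,4) by simp
  then have "ph *\<^sub>R ((1 / ph) *\<^sub>R (y - y')) = ph *\<^sub>R (J3 l1 l2 *v (th *\<^sub>R (y - y')))"
    by simp
  then have "y - y' = (ph * th) *\<^sub>R (J3 l1 l2 *v (y - y'))"
    using assms(1) by (simp add: matrix_vector_mult_scaleR del: scaleR_diff_right)
  moreover have "(1 - ph * th * l1) * (1 - ph * th * l2) \<noteq> 0"
    using assms(2) by (simp add: algebra_simps)
  ultimately have "y - y' = 0"
    by (rule J3_fixed_point_zero[rotated])
  then show ?thesis by simp
qed

lemma exact_scheme_J3I:
  assumes "h \<ge> 0" and "ph \<noteq> 0" and "(1 - ph * l1 * th) * (1 - ph * l2 * th) \<noteq> 0"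
    and "J3_exactness_conditions l1 l2 h ps ph th"
  shows "exact_scheme h ps ph th (J3 l1 l2)"
  unfolding exact_scheme_def
proof (intro allI impI)
  fix x0 xs k and x :: "real \<Rightarrow> real^3"
  assume "xs 0 = x0 \<and> scheme_step ps ph th (J3 l1 l2) xs \<and> x 0 = x0
    \<and> (\<forall>t\<ge>0. (x has_vector_derivative (J3 l1 l2 *v x t)) (at t within {0..}))"
  then have init: "xs 0 = x 0" and step: "scheme_step ps ph th (J3 l1 l2) xs"
    and ode: "\<forall>t\<ge>0. (x has_vector_derivative (J3 l1 l2 *v x t)) (at t within {0..})"
    by auto
  show "xs k = x (real k * h)"
  proof (induction k)
    case 0
    then show ?case using init by simp
  next
    case (Suc k)
    have "xs (Suc k) = J3_flow l1 l2 h (xs k)"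
      using J3_scheme_step_unique[OF assms(2,3)] step J3_flow_scheme_step[OF assms(2,4)]
      unfolding scheme_step_def by blast
    also have "\<dots> = J3_flow l1 l2 h (J3_flow l1 l2 (real k * h) (x 0))"
      using Suc.IH J3_solution_eq_flow[OF ode, of "real k * h"] assms(1) by simp
    also have "\<dots> = J3_flow l1 l2 (real (Suc k) * h) (x 0)"
      using J3_flow_add[of l1 l2 "real k * h" h "x 0"] by (simp add: algebra_simps)
    also have "\<dots> = x (real (Suc k) * h)"
      using J3_solution_eq_flow[OF ode, of "real (Suc k) * h"] assms(1) by simp
    finally show ?case .
  qed
qed

lemma psi_phi_eigenvalue_conditions:
  fixes l1 l2 ea eb T :: real
  assumes "l1 \<noteq> l2"
  defines "ps \<equiv> 1 + (l1 * (eb - 1) - l2 * (ea - 1) + l1 * l2 * (ea - eb) * T) / (l1 - l2)"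
    and "ph \<equiv> (ea - eb + (l2 * (eb - 1) - l1 * (ea - 1)) * T) / (l1 - l2)"
  shows "ps + ph * l1 = ea + T * l1 * (1 - ea)" and "ps + ph * l2 = eb + T * l2 * (1 - eb)"
proof -
  have d: "l1 - l2 \<noteq> 0" using assms(1) by simp
  have ps: "(ps - 1) * (l1 - l2) = l1 * (eb - 1) - l2 * (ea - 1) + l1 * l2 * (ea - eb) * T"
    and ph: "ph * (l1 - l2) = ea - eb + (l2 * (eb - 1) - l1 * (ea - 1)) * T"
    using d by (simp_all add: ps_def ph_def)
  have expand: "(ps + ph * l - (e + T * l * (1 - e))) * (l1 - l2)
      = (l1 * (eb - 1) - l2 * (ea - 1) + l1 * l2 * (ea - eb) * T)
        + (ea - eb + (l2 * (eb - 1) - l1 * (ea - 1)) * T) * l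
        + (1 - e - T * l * (1 - e)) * (l1 - l2)" for l e
    by (simp only: ps[symmetric] ph[symmetric]) (simp add: algebra_simps)
  have "(ps + ph * l1 - (ea + T * l1 * (1 - ea))) * (l1 - l2) = 0"
    "(ps + ph * l2 - (eb + T * l2 * (1 - eb))) * (l1 - l2) = 0"
    unfolding expand by (simp_all add: algebra_simps)
  then show "ps + ph * l1 = ea + T * l1 * (1 - ea)" and "ps + ph * l2 = eb + T * l2 * (1 - eb)"
    using d by simp_all
qed

lemma T1_linear_equation:
  assumes "l1 \<noteq> 0" and "l1 \<noteq> l2" and "T1_den l1 l2 h \<noteq> 0"
  shows "T1 l1 l2 h * ((l1 - l2) * l1 * h * exp (l1 * h) - l2 * (exp (l1 * h) - exp (l2 * h)))
    = (l1 - l2) * h * exp (l1 * h) - (exp (l1 * h) - exp (l2 * h))"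
proof -
  have d: "l1 - l2 \<noteq> 0" using assms(2) by simp
  have num: "T1_num l1 l2 h * (l1 - l2)
      = 2 * l1 * ((l1 - l2) * h * exp (l1 * h) - (exp (l1 * h) - exp (l2 * h)))"
    using d by (simp add: T1_num_def field_simps; simp add: algebra_simps)
  have den: "T1_den l1 l2 h * (l1 - l2)
      = 2 * l1 * ((l1 - l2) * l1 * h * exp (l1 * h) - l2 * (exp (l1 * h) - exp (l2 * h)))"
    using d by (simp add: T1_den_def field_simps power2_eq_square; simp add: algebra_simps)
  have "T1 l1 l2 h * T1_den l1 l2 h * (l1 - l2) = T1_num l1 l2 h * (l1 - l2)"
    using assms(3) by (simp add: T1_def)
  then show ?thesis
    using num den assms(1) by (simp add: mult.assoc)
qed

lemma phi_jordan_condition: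
  fixes l1 l2 h ea eb T :: real
  assumes "l1 \<noteq> l2"
    and T: "T * ((l1 - l2) * l1 * h * ea - l2 * (ea - eb)) = (l1 - l2) * h * ea - (ea - eb)"
  shows "(ea - eb + (l2 * (eb - 1) - l1 * (ea - 1)) * T) / (l1 - l2)
    = h * ea - T * (l1 * h * ea + ea - 1)"
proof -
  have d: "l1 - l2 \<noteq> 0" using assms(1) by simp
  have "ea - eb + (l2 * (eb - 1) - l1 * (ea - 1)) * T - (h * ea - T * (l1 * h * ea + ea - 1)) * (l1 - l2)
      = T * ((l1 - l2) * l1 * h * ea - l2 * (ea - eb)) - ((l1 - l2) * h * ea - (ea - eb))"
    by (simp add: algebra_simps)
  also have "\<dots> = 0" using T by simp
  finally show ?thesis using d by (simp add: field_simps)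
qed

lemma J3_exactness_conditions_psi_phi_theta:
  assumes "l1 \<noteq> l2" and "h > 0" and "l1 \<noteq> 0 \<Longrightarrow> T1_den l1 l2 h \<noteq> 0"
    and "phi l1 l2 h \<noteq> 0"
  shows "J3_exactness_conditions l1 l2 h (psi l1 l2 h) (phi l1 l2 h) (theta l1 l2 h)"
proof (cases "l1 = 0")
  case True
  then have "l2 * h \<noteq> 0" using assms(1,2) by simp
  then have "exp (l2 * h) - 1 \<noteq> 0" by simp
  then show ?thesis using True \<open>l2 * h \<noteq> 0\<close>
    by (simp add: J3_exactness_conditions_def psi_def phi_def theta_def field_simps)
next
  case False
  define ea eb T where "ea = exp (l1 * h)" and "eb = exp (l2 * h)" and "T = T1 l1 l2 h"
  have psi: "psi l1 l2 h = 1 + (l1 * (eb - 1) - l2 * (ea - 1) + l1 * l2 * (ea - eb) * T) / (l1 - l2)"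
    and phi: "phi l1 l2 h = (ea - eb + (l2 * (eb - 1) - l1 * (ea - 1)) * T) / (l1 - l2)"
    using False by (simp_all add: psi_def phi_def ea_def eb_def T_def)
  have phi_theta: "phi l1 l2 h * theta l1 l2 h = T"
    using False assms(4) by (simp add: theta_def T_def)
  have "phi l1 l2 h = h * ea - T * (l1 * h * ea + ea - 1)"
    unfolding phi
    using phi_jordan_condition[OF assms(1)] T1_linear_equation[OF False assms(1) assms(3)[OF False]]
    by (simp add: ea_def eb_def T_def)
  moreover have "psi l1 l2 h + phi l1 l2 h * l1 = ea + T * l1 * (1 - ea)"
    and "psi l1 l2 h + phi l1 l2 h * l2 = eb + T * l2 * (1 - eb)"
    unfolding psi phi by (fact psi_phi_eigenvalue_conditions[OF assms(1)])+
  ultimately show ?thesis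
    unfolding J3_exactness_conditions_def phi_theta ea_def eb_def by blast
qed

theorem theorem7:
  fixes l1 l2 h :: real
  assumes "l1 \<noteq> l2" and "h > 0"
    and "l1 \<noteq> 0 \<Longrightarrow> T1_den l1 l2 h \<noteq> 0"
    and "phi l1 l2 h \<noteq> 0"
    and "(1 - phi l1 l2 h * l1 * theta l1 l2 h) * (1 - phi l1 l2 h * l2 * theta l1 l2 h) \<noteq> 0"
  shows "exact_scheme h (psi l1 l2 h) (phi l1 l2 h) (theta l1 l2 h) (J3 l1 l2)"
  using assms(2,4,5) J3_exactness_conditions_psi_phi_theta[OF assms(1-4)]
  by (intro exact_scheme_J3I) simp_all

end
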